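(* Let $n\ge1$, $0<s<1$, $p>1$, $\lambda\in\mathbb{R}$, $\Sigma_\lambda=\{x\in\mathbb{R}^n: x_1<\lambda\}$, and for $x\in\mathbb{R}^n$ let $x^\lambda=(2\lambda-x_1,x_2,\dots,x_n)$. Let $u:\mathbb{R}^n\to\mathbb{R}$, set $u_\lambda(x)=u(x^\lambda)$ and $w(x)=u_\lambda(x)-u(x)$. Let $\Omega$ be a bounded domain contained in $\Sigma_\lambda$. Assume $w\in L_{sp}\cap C^{1,1}_{loc}(\Omega)$, $w$ is lower semi-continuous on $\bar\Omega$, $(-\Delta)^s_p u$ and $(-\Delta)^s_p u_\lambda$ are defined at every point of $\Omega$, and $$(-\Delta)^s_p u_\lambda(x)-(-\Delta)^s_p u(x)\ge 0 \text{ in }\Omega,\qquad w(x)\ge 0 \text{ in }\Sigma_\lambda\setminus\Omega,\qquad w(x^\lambda)=-w(x)\text{ in }\Sigma_\lambda.$$ Then $w(x)\ge 0$ in $\Omega$. Furthermore, if $w=0$ at some point of $\Omega$, then $w=0$ almost everywhere in $\mathbb{R}^n$. These conclusions also hold for an unbounded region $\Omega\subset\Sigma_\lambda$ if one additionally assumes $\liminf_{|x|\to\infty} w(x)\ge 0$.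
   Context: The fractional $p$-Laplacian is $$(-\Delta)^s_p u(x)=C_{n,sp}\,\lim_{\epsilon\to 0}\int_{\mathbb{R}^n\setminus B_\epsilon(x)}\frac{|u(x)-u(y)|^{p-2}[u(x)-u(y)]}{|x-y|^{n+sp}}\,dy,$$ with $C_{n,sp}>0$ a normalizing constant, and $$L_{sp}=\Big\{u\in L^1_{loc}(\mathbb{R}^n)\ :\ \int_{\mathbb{R}^n}\frac{|u(x)|}{1+|x|^{n+sp}}\,dx<\infty\Big\}.$$ *)

theory Defs
  imports "HOL-Analysis.Analysis"
begin

text \<open>Reflection of x in the hyperplane x_k = lambda (k plays the role of the first coordinate).\<close>
definition reflect :: "'n::finite \<Rightarrow> real \<Rightarrow> real^'n \<Rightarrow> real^'n" where
  "reflect k lam x = (\<chi> i. if i = k then 2 * lam - x $ k else x $ i)"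

definition half_space :: "'n::finite \<Rightarrow> real \<Rightarrow> (real^'n) set" where
  "half_space k lam = {x. x $ k < lam}"

definition fpl_kernel :: "real \<Rightarrow> real \<Rightarrow> (real^'n::finite \<Rightarrow> real) \<Rightarrow> real^'n \<Rightarrow> real^'n \<Rightarrow> real" where
  "fpl_kernel s p u x y =
     \<bar>u x - u y\<bar> powr (p - 2) * (u x - u y) / norm (x - y) powr (real CARD('n) + s * p)"

definition fpl_trunc :: "real \<Rightarrow> real \<Rightarrow> (real^'n::finite \<Rightarrow> real) \<Rightarrow> real^'n \<Rightarrow> real \<Rightarrow> real" where
  "fpl_trunc s p u x eps = (LINT y : - ball x eps | lborel. fpl_kernel s p u x y)"

definition fpl_defined :: "real \<Rightarrow> real \<Rightarrow> (real^'n::finite \<Rightarrow> real) \<Rightarrow> real^'n \<Rightarrow> bool" where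
  "fpl_defined s p u x \<longleftrightarrow>
     (\<forall>eps>0. set_integrable lborel (- ball x eps) (fpl_kernel s p u x)) \<and>
     (\<exists>L. (fpl_trunc s p u x \<longlongrightarrow> L) (at_right 0))"

definition frac_p_laplacian :: "real \<Rightarrow> real \<Rightarrow> real \<Rightarrow> (real^'n::finite \<Rightarrow> real) \<Rightarrow> real^'n \<Rightarrow> real" where
  "frac_p_laplacian C s p u x = C * Lim (at_right 0) (fpl_trunc s p u x)"

definition L_sp :: "real \<Rightarrow> real \<Rightarrow> (real^'n::finite \<Rightarrow> real) \<Rightarrow> bool" where
  "L_sp s p u \<longleftrightarrow>
     (\<forall>K. compact K \<longrightarrow> set_integrable lebesgue K u) \<and>
     integrable lebesgue (\<lambda>x. \<bar>u x\<bar> / (1 + norm x powr (real CARD('n) + s * p)))"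

definition C11_loc :: "(real^'n::finite) set \<Rightarrow> (real^'n \<Rightarrow> real) \<Rightarrow> bool" where
  "C11_loc \<Omega> u \<longleftrightarrow>
     (\<exists>D :: (real^'n) \<Rightarrow> ((real^'n) \<Rightarrow>\<^sub>L real).
        (\<forall>x\<in>\<Omega>. (u has_derivative blinfun_apply (D x)) (at x)) \<and>
        (\<forall>K. compact K \<and> K \<subseteq> \<Omega> \<longrightarrow>
           (\<exists>L. \<forall>x\<in>K. \<forall>y\<in>K. norm (D x - D y) \<le> L * dist x y)))"

definition lsc_on :: "('a::topological_space) set \<Rightarrow> ('a \<Rightarrow> real) \<Rightarrow> bool" where
  "lsc_on S u \<longleftrightarrow> (\<forall>x\<in>S. \<forall>a. a < u x \<longrightarrow> (\<forall>\<^sub>F y in at x within S. a < u y))"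

end

theory Submission
  imports Defs
begin

text \<open>Suppose \<open>w = u\<^sub>\<lambda> - u\<close> is negative somewhere in \<open>\<Omega>\<close>. Lower semicontinuity, together with
  boundedness of \<open>\<Omega>\<close> or the condition at infinity, gives a point \<open>x\<close> where \<open>w\<close> attains a negative
  minimum over the whole half space \<open>\<Sigma>\<^sub>\<lambda>\<close>; it lies in \<open>\<Omega>\<close> because \<open>w \<ge> 0\<close> on \<open>\<Sigma>\<^sub>\<lambda> - \<Omega>\<close> and \<open>w = 0\<close>
  on the hyperplane. Folding the principal value integral of
  \<open>(-\<Delta>)\<^sup>s\<^sub>p u\<^sub>\<lambda>(x) - (-\<Delta>)\<^sup>s\<^sub>p u(x) \<ge> 0\<close> onto \<open>\<Sigma>\<^sub>\<lambda>\<close> via \<open>y \<mapsto> y\<^sup>\<lambda>\<close>, the integrand becomes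
  pointwise nonpositive, since \<open>t \<mapsto> |t|\<^bsup>p-2\<^esup>t\<close> is increasing and \<open>|x - y| < |x - y\<^sup>\<lambda>|\<close> on \<open>\<Sigma>\<^sub>\<lambda>\<close>;
  so it vanishes almost everywhere, which forces \<open>w(x) = 0\<close>. If instead \<open>w \<ge> 0\<close> vanishes at a point
  of \<open>\<Omega>\<close>, that point is a minimum and the same argument gives \<open>w = 0\<close> a.e. on \<open>\<Sigma>\<^sub>\<lambda>\<close>, hence on
  \<open>\<real>\<^sup>n\<close> by antisymmetry.\<close>

section \<open>Reflection in a hyperplane\<close>

lemma reflect_reflect [simp]: "reflect k lam (reflect k lam x) = x"
  by (simp add: vec_eq_iff reflect_def)

lemma reflect_eq_self: "x $ k = lam \<Longrightarrow> reflect k lam x = x"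
  by (simp add: vec_eq_iff reflect_def)

lemma reflect_eq_affine:
  fixes k :: "'n::finite"
  shows "reflect k lam x = (2 * lam) *\<^sub>R axis k 1
           + (\<Sum>j\<in>Basis. ((if j = axis k 1 then -1 else 1) * (x \<bullet> j)) *\<^sub>R j)"
proof -
  have "(\<Sum>j\<in>Basis. ((if j = axis k 1 then -1 else 1) * (x \<bullet> j)) *\<^sub>R j)
      = (\<Sum>j\<in>Basis. (x \<bullet> j) *\<^sub>R j - (if j = axis k 1 then 2 * (x \<bullet> j) else 0) *\<^sub>R j)"
    by (intro sum.cong refl) (auto simp: scaleR_left_diff_distrib[symmetric])
  also have "\<dots> = (\<Sum>j\<in>Basis. (x \<bullet> j) *\<^sub>R j)
                  - (\<Sum>j\<in>Basis. (if j = axis k 1 then 2 * (x \<bullet> j) else 0) *\<^sub>R j)"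
    by (simp add: sum_subtractf)
  also have "\<dots> = x - (2 * x $ k) *\<^sub>R axis k 1"
    by (simp add: euclidean_representation inner_axis if_distrib[of "\<lambda>c. c *\<^sub>R _"] sum.delta'
        cong: if_cong)
  finally show ?thesis
    by (simp add: vec_eq_iff reflect_def axis_def)
qed

lemma reflect_borel_measurable [measurable]:
  "reflect k lam \<in> borel_measurable (borel :: (real^'n::finite) measure)"
  unfolding reflect_eq_affine[abs_def] by measurable

lemma distr_lborel_reflect: "distr lborel borel (reflect k lam) = (lborel :: (real^'n::finite) measure)"
proof -
  have "lborel = density (distr lborel borel (\<lambda>x::real^'n. (2 * lam) *\<^sub>R axis k 1
           + (\<Sum>j\<in>Basis. ((if j = axis k 1 then -1 else 1) * (x \<bullet> j)) *\<^sub>R j)))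
        (\<lambda>_. \<Prod>j\<in>(Basis::(real^'n) set). \<bar>if j = axis k 1 then -1 else 1 :: real\<bar>)"
    by (rule lborel_affine_euclidean) simp
  then show ?thesis
    by (simp add: reflect_eq_affine[abs_def] prod.neutral density_1)
qed

lemma set_integral_reflect:
  fixes f :: "real^'n::finite \<Rightarrow> real"
  assumes f: "set_integrable lborel A f"
  shows "set_integrable lborel (reflect k lam -` A) (\<lambda>y. f (reflect k lam y))"
    and "(LINT y:reflect k lam -` A|lborel. f (reflect k lam y)) = (LINT y:A|lborel. f y)"
proof -
  define g where "g y = indicator A y *\<^sub>R f y" for y
  have g: "g \<in> borel_measurable lborel"
    using f unfolding set_integrable_def g_def by (rule borel_measurable_integrable)
  have comp: "(\<lambda>y. indicator (reflect k lam -` A) y *\<^sub>R f (reflect k lam y)) = (\<lambda>y. g (reflect k lam y))"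
    by (simp add: g_def indicator_def)
  have "integrable lborel (\<lambda>y. g (reflect k lam y)) \<longleftrightarrow> integrable lborel g"
    using integrable_distr_eq[of "reflect k lam" lborel borel g] g by (simp add: distr_lborel_reflect)
  moreover have "integrable lborel g"
    using f unfolding set_integrable_def g_def[abs_def] .
  ultimately show "set_integrable lborel (reflect k lam -` A) (\<lambda>y. f (reflect k lam y))"
    unfolding set_integrable_def comp by simp
  have "integral\<^sup>L lborel (\<lambda>y. g (reflect k lam y)) = integral\<^sup>L lborel g"
    using integral_distr[of "reflect k lam" lborel borel g] g by (simp add: distr_lborel_reflect)
  then show "(LINT y:reflect k lam -` A|lborel. f (reflect k lam y)) = (LINT y:A|lborel. f y)"
    unfolding set_lebesgue_integral_def comp by (simp add: g_def[abs_def])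
qed

lemma AE_reflect:
  assumes "AE x in (lborel :: (real^'n::finite) measure). P x"
  shows "AE x in lborel. P (reflect k lam x)"
proof -
  obtain N where N: "{x. \<not> P x} \<subseteq> N" "N \<in> null_sets lborel"
    using assms by (auto elim!: AE_E simp: null_sets_def)
  have "reflect k lam -` N \<in> null_sets lborel"
    using N(2) emeasure_distr[of "reflect k lam" lborel borel N]
      measurable_sets[OF reflect_borel_measurable, of N k lam]
    by (auto simp: null_sets_def distr_lborel_reflect)
  then show ?thesis
    by (rule AE_I') (use N in auto)
qed

lemma AE_not_on_hyperplane: "AE y in (lborel :: (real^'n::finite) measure). y $ k \<noteq> lam"
proof -
  have "negligible {y::real^'n. axis k 1 \<bullet> y = lam}"
    by (rule negligible_hyperplane) simp
  moreover have "{y::real^'n. axis k 1 \<bullet> y = lam} \<in> sets lborel"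
    by (simp add: borel_closed closed_hyperplane)
  ultimately have "{y::real^'n. axis k 1 \<bullet> y = lam} \<in> null_sets lborel"
    using null_sets_completion_iff by (blast dest: negligible_iff_null_sets[THEN iffD1])
  then show ?thesis
    by (rule AE_not_in[THEN eventually_mono]) (simp add: inner_axis')
qed

lemma half_space_sets: "half_space k lam \<in> sets (lborel :: (real^'n::finite) measure)"
  by (simp add: half_space_def borel_open open_halfspace_component_lt_cart)

lemma ball_subset_half_space:
  fixes x :: "real^'n::finite"
  assumes "r \<le> lam - x $ k"
  shows "ball x r \<subseteq> half_space k lam"
proof
  fix y assume "y \<in> ball x r"
  then have "\<bar>(y - x) $ k\<bar> < r"
    by (metis component_le_norm_cart dist_norm mem_ball norm_minus_commute order.strict_trans1)
  with assms show "y \<in> half_space k lam" by (simp add: half_space_def)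
qed

lemma AE_eq_0_if_odd_under_reflect:
  fixes f :: "real^'n::finite \<Rightarrow> real"
  assumes half: "AE y in lborel. y \<in> half_space k lam \<longrightarrow> f y = 0"
    and odd: "\<And>y. f (reflect k lam y) = - f y"
  shows "AE y in lborel. f y = 0"
  using half AE_reflect[OF half, of k lam]
proof eventually_elim
  case (elim y)
  consider "y $ k < lam" | "y $ k = lam" | "lam < y $ k" by linarith
  then show ?case
  proof cases
    case 2
    then show ?thesis using odd[of y] by (simp add: reflect_eq_self)
  next
    case 3
    then have "f (reflect k lam y) = 0" using elim by (simp add: half_space_def reflect_def)
    then show ?thesis using odd[of y] by simp
  qed (use elim in \<open>simp add: half_space_def\<close>)
qed

lemma norm_diff_less_norm_diff_reflect:
  fixes x y :: "real^'n::finite"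
  assumes "x \<in> half_space k lam" "y \<in> half_space k lam"
  shows "norm (x - y) < norm (x - reflect k lam y)"
proof -
  have sq: "norm v ^ 2 = (v $ k)^2 + (\<Sum>i\<in>UNIV - {k}. (v $ i)^2)" for v :: "real^'n"
    unfolding power2_norm_eq_inner inner_vec_def by (simp add: power2_eq_square sum.remove)
  have same: "(\<Sum>i\<in>UNIV - {k}. ((x - y) $ i)^2) = (\<Sum>i\<in>UNIV - {k}. ((x - reflect k lam y) $ i)^2)"
    by (intro sum.cong refl) (simp add: reflect_def)
  \<comment> \<open>the squared distances differ by \<open>4 (\<lambda> - x\<^sub>k) (\<lambda> - y\<^sub>k) > 0\<close>\<close>
  have "((x - y) $ k)^2 < ((x - reflect k lam y) $ k)^2"
    using assms mult_pos_pos[of "lam - x $ k" "lam - y $ k"]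
    by (simp add: half_space_def reflect_def power2_eq_square algebra_simps)
  then have "norm (x - y) ^ 2 < norm (x - reflect k lam y) ^ 2"
    unfolding sq same by simp
  then show ?thesis by (simp add: power_less_imp_less_base)
qed

lemma set_integral_fold_half_space:
  fixes f :: "real^'n::finite \<Rightarrow> real"
  assumes f: "set_integrable lborel A f" and A: "A \<in> sets lborel"
    and far: "{y. lam < y $ k} \<subseteq> A"
  shows "set_integrable lborel (half_space k lam) (\<lambda>y. f (reflect k lam y))"
    and "(LINT y:A|lborel. f y) = (LINT y:A \<inter> half_space k lam|lborel. f y)
           + (LINT y:half_space k lam|lborel. f (reflect k lam y))"
proof -
  have far_meas: "{y::real^'n. lam < y $ k} \<in> sets lborel"
    by (simp add: borel_open open_halfspace_component_gt_cart)
  have pre: "reflect k lam -` {y. lam < y $ k} = half_space k lam"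
    by (auto simp: half_space_def reflect_def)
  have f_far: "set_integrable lborel {y. lam < y $ k} f"
    by (rule set_integrable_subset[OF f _ far]) simp
  show "set_integrable lborel (half_space k lam) (\<lambda>y. f (reflect k lam y))"
    using set_integral_reflect(1)[OF f_far, of k lam] unfolding pre .
  have "(LINT y:A|lborel. f y) = (LINT y:(A \<inter> half_space k lam) \<union> {y. lam < y $ k}|lborel. f y)"
  proof (rule set_integral_cong_set)
    show A_meas: "set_borel_measurable lborel A f"
      using f unfolding set_integrable_def set_borel_measurable_def by (rule borel_measurable_integrable)
    show "set_borel_measurable lborel ((A \<inter> half_space k lam) \<union> {y. lam < y $ k}) f"
    proof (rule set_borel_measurable_subset[OF A_meas])
      show "(A \<inter> half_space k lam) \<union> {y. lam < y $ k} \<in> sets lborel"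
        using A half_space_sets[of k lam] far_meas by (intro sets.Un sets.Int)
    qed (use far in auto)
    show "AE y in lborel. (y \<in> (A \<inter> half_space k lam) \<union> {y. lam < y $ k}) = (y \<in> A)"
      using AE_not_on_hyperplane[of k lam] by eventually_elim (use far in \<open>auto simp: half_space_def\<close>)
  qed
  also have "\<dots> = (LINT y:A \<inter> half_space k lam|lborel. f y) + (LINT y:{y. lam < y $ k}|lborel. f y)"
  proof (rule set_integral_Un)
    show "set_integrable lborel (A \<inter> half_space k lam) f"
      by (rule set_integrable_subset[OF f]) (use A half_space_sets in auto)
  qed (auto simp: half_space_def intro: f_far)
  also have "(LINT y:{y. lam < y $ k}|lborel. f y) = (LINT y:half_space k lam|lborel. f (reflect k lam y))"
    using set_integral_reflect(2)[OF f_far, of k lam] unfolding pre by (rule sym)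
  finally show "(LINT y:A|lborel. f y) = (LINT y:A \<inter> half_space k lam|lborel. f y)
           + (LINT y:half_space k lam|lborel. f (reflect k lam y))" .
qed

section \<open>The folded kernel\<close>

definition signed_powr :: "real \<Rightarrow> real \<Rightarrow> real" where
  "signed_powr p t = \<bar>t\<bar> powr (p - 2) * t"

lemma signed_powr_eq_sgn: "signed_powr p t = sgn t * \<bar>t\<bar> powr (p - 1)"
proof (cases "t = 0")
  case False
  have "\<bar>t\<bar> powr (p - 1) = \<bar>t\<bar> powr (p - 2) * \<bar>t\<bar>"
    using powr_add[of "\<bar>t\<bar>" "p - 2" 1] False by simp
  then show ?thesis
    unfolding signed_powr_def by (metis mult.left_commute sgn_mult_abs)
qed (simp add: signed_powr_def)

lemma strict_mono_signed_powr:
  assumes "1 < p"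
  shows "strict_mono (signed_powr p)"
proof (rule strict_monoI)
  fix a b :: real
  assume ab: "a < b"
  consider "0 \<le> a" | "b \<le> 0" | "a < 0" "0 < b" using ab by linarith
  then show "signed_powr p a < signed_powr p b"
  proof cases
    case 1
    then have "a powr (p - 1) < b powr (p - 1)" using ab assms by (intro powr_less_mono2) auto
    then show ?thesis using 1 ab by (cases "a = 0") (auto simp: signed_powr_eq_sgn)
  next
    case 2
    then have "(- b) powr (p - 1) < (- a) powr (p - 1)" using ab assms by (intro powr_less_mono2) auto
    then show ?thesis using 2 ab by (cases "b = 0") (auto simp: signed_powr_eq_sgn)
  next
    case 3
    then show ?thesis
      by (simp add: signed_powr_eq_sgn) (smt (verit) powr_gt_zero)
  qed
qed

text \<open>With \<open>t = u(x) - u(y)\<close>, \<open>m = w(x)\<close>, \<open>w = w(y)\<close> and \<open>N\<^sub>1 < N\<^sub>2\<close> the kernel denominators at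
  \<open>y\<close> and at the reflected point, this is the sign of the folded integrand: for \<open>m \<le> min 0 w\<close>
  the first numerator and the sum of both are nonpositive, and the first has the larger weight.\<close>

lemma weighted_increments_nonpos:
  fixes G :: "real \<Rightarrow> real"
  assumes G: "strict_mono G" and m: "m \<le> 0" "m \<le> w" and N: "0 < N\<^sub>1" "N\<^sub>1 < N\<^sub>2"
  shows "(G (t + m - w) - G t) / N\<^sub>1 + (G (t + m) - G (t - w)) / N\<^sub>2 \<le> 0"
    and "(G (t + m - w) - G t) / N\<^sub>1 + (G (t + m) - G (t - w)) / N\<^sub>2 = 0 \<Longrightarrow> m = 0 \<and> w = 0"
proof -
  define D\<^sub>1 where "D\<^sub>1 = G (t + m - w) - G t"
  define D\<^sub>2 where "D\<^sub>2 = G (t + m) - G (t - w)"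
  have mono: "G a \<le> G b" if "a \<le> b" for a b
    using G that by (simp add: strict_mono_less_eq)
  have D\<^sub>1: "D\<^sub>1 \<le> 0" and sum: "D\<^sub>1 + D\<^sub>2 \<le> 0"
    using mono[of "t + m - w" t] mono[of "t + m - w" "t - w"] mono[of "t + m" t] m
    by (simp_all add: D\<^sub>1_def D\<^sub>2_def)
  have split: "D\<^sub>1 / N\<^sub>1 + D\<^sub>2 / N\<^sub>2 = (D\<^sub>1 + D\<^sub>2) / N\<^sub>2 + D\<^sub>1 * (1 / N\<^sub>1 - 1 / N\<^sub>2)"
    using N by (simp add: field_simps)
  have gap: "0 < 1 / N\<^sub>1 - 1 / N\<^sub>2" using N by (simp add: field_simps)
  have "(D\<^sub>1 + D\<^sub>2) / N\<^sub>2 \<le> 0" "D\<^sub>1 * (1 / N\<^sub>1 - 1 / N\<^sub>2) \<le> 0"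
    using sum D\<^sub>1 gap N by (simp_all add: divide_nonpos_pos mult_nonpos_nonneg)
  then show "(G (t + m - w) - G t) / N\<^sub>1 + (G (t + m) - G (t - w)) / N\<^sub>2 \<le> 0"
    using split by (simp add: D\<^sub>1_def D\<^sub>2_def)
  assume "(G (t + m - w) - G t) / N\<^sub>1 + (G (t + m) - G (t - w)) / N\<^sub>2 = 0"
  then have "D\<^sub>1 / N\<^sub>1 + D\<^sub>2 / N\<^sub>2 = 0" by (simp add: D\<^sub>1_def D\<^sub>2_def)
  with \<open>(D\<^sub>1 + D\<^sub>2) / N\<^sub>2 \<le> 0\<close> \<open>D\<^sub>1 * (1 / N\<^sub>1 - 1 / N\<^sub>2) \<le> 0\<close> split
  have "(D\<^sub>1 + D\<^sub>2) / N\<^sub>2 = 0" "D\<^sub>1 * (1 / N\<^sub>1 - 1 / N\<^sub>2) = 0" by linarith+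
  then have "D\<^sub>1 + D\<^sub>2 = 0" "D\<^sub>1 = 0" using gap N by auto
  then have "G (t + m) = G t" "G (t - w) = G t"
    using mono[of "t + m - w" "t - w"] mono[of "t + m" t] m
    by (simp_all add: D\<^sub>1_def D\<^sub>2_def)
  then show "m = 0 \<and> w = 0"
    using strict_mono_eq[OF G] by fastforce
qed

definition kernel_diff ::
    "real \<Rightarrow> real \<Rightarrow> (real^'n::finite \<Rightarrow> real) \<Rightarrow> 'n \<Rightarrow> real \<Rightarrow> real^'n \<Rightarrow> real^'n \<Rightarrow> real" where
  "kernel_diff s p u k lam x y = fpl_kernel s p (\<lambda>z. u (reflect k lam z)) x y - fpl_kernel s p u x y"

definition folded_kernel_diff ::
    "real \<Rightarrow> real \<Rightarrow> (real^'n::finite \<Rightarrow> real) \<Rightarrow> 'n \<Rightarrow> real \<Rightarrow> real^'n \<Rightarrow> real^'n \<Rightarrow> real" where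
  "folded_kernel_diff s p u k lam x y = kernel_diff s p u k lam x y + kernel_diff s p u k lam x (reflect k lam y)"

lemma folded_kernel_diff_nonpos:
  fixes u :: "real^'n::finite \<Rightarrow> real"
  assumes s: "0 < s" and p: "1 < p"
    and x: "x \<in> half_space k lam" and y: "y \<in> half_space k lam" "y \<noteq> x"
    and min: "u (reflect k lam x) - u x \<le> 0" "u (reflect k lam x) - u x \<le> u (reflect k lam y) - u y"
  shows "folded_kernel_diff s p u k lam x y \<le> 0"
    and "folded_kernel_diff s p u k lam x y = 0 \<Longrightarrow>
           u (reflect k lam x) - u x = 0 \<and> u (reflect k lam y) - u y = 0"
proof -
  define E where "E = real CARD('n) + s * p"
  have E: "0 < E" using s p by (simp add: E_def add_pos_nonneg)
  define N\<^sub>1 where "N\<^sub>1 = norm (x - y) powr E"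
  define N\<^sub>2 where "N\<^sub>2 = norm (x - reflect k lam y) powr E"
  have N: "0 < N\<^sub>1" "N\<^sub>1 < N\<^sub>2"
    using y(2) powr_less_mono2[OF E _ norm_diff_less_norm_diff_reflect[OF x y(1)]]
    by (simp_all add: N\<^sub>1_def N\<^sub>2_def)
  have eq: "folded_kernel_diff s p u k lam x y
      = (signed_powr p ((u x - u y) + (u (reflect k lam x) - u x) - (u (reflect k lam y) - u y))
           - signed_powr p (u x - u y)) / N\<^sub>1
        + (signed_powr p ((u x - u y) + (u (reflect k lam x) - u x))
           - signed_powr p ((u x - u y) - (u (reflect k lam y) - u y))) / N\<^sub>2"
    by (simp add: folded_kernel_diff_def kernel_diff_def fpl_kernel_def signed_powr_def
        N\<^sub>1_def N\<^sub>2_def E_def diff_divide_distrib)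
  note increments = weighted_increments_nonpos[OF strict_mono_signed_powr[OF p] min N]
  show "folded_kernel_diff s p u k lam x y \<le> 0"
    unfolding eq by (rule increments(1))
  show "folded_kernel_diff s p u k lam x y = 0 \<Longrightarrow>
           u (reflect k lam x) - u x = 0 \<and> u (reflect k lam y) - u y = 0"
    unfolding eq by (rule increments(2))
qed

section \<open>Principal values of the kernel difference\<close>

lemma set_integral_Diff_ball_tendsto:
  fixes f :: "'a::euclidean_space \<Rightarrow> real"
  assumes f: "set_integrable lborel S f"
  shows "((\<lambda>r. LINT y:S - ball x r|lborel. f y) \<longlongrightarrow> (LINT y:S|lborel. f y)) (at_right 0)"
proof -
  define g where "g y = indicator S y *\<^sub>R f y" for y
  have g: "integrable lborel g" using f by (simp add: set_integrable_def g_def[abs_def])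
  have eq: "indicator (S - ball x r) y *\<^sub>R f y = g y * indicator (- ball x r) y" for r y
    by (simp add: g_def indicator_def)
  have "((\<lambda>t. LINT y|lborel. g y * indicator (- ball x (inverse t)) y) \<longlongrightarrow> integral\<^sup>L lborel g) at_top"
  proof (rule integral_dominated_convergence_at_top[where w="\<lambda>y. \<bar>g y\<bar>"])
    show "AE y in lborel. ((\<lambda>t. g y * indicator (- ball x (inverse t)) y) \<longlongrightarrow> g y) at_top"
      using AE_lborel_singleton[of x]
    proof eventually_elim
      case (elim y)
      have "\<forall>\<^sub>F t in at_top. inverse t < dist x y"
        using elim tendsto_inverse_0_at_top[OF filterlim_ident]
        by (simp add: order_tendstoD(2))
      then have "\<forall>\<^sub>F t in at_top. g y * indicator (- ball x (inverse t)) y = g y"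
        by eventually_elim (simp add: indicator_def)
      then show ?case by (rule tendsto_eventually)
    qed
  qed (use g in \<open>auto simp: indicator_def\<close>)
  then show ?thesis
    unfolding filterlim_at_right_to_top set_lebesgue_integral_def eq by (simp add: g_def[abs_def])
qed

lemma set_integral_nonpos:
  fixes f :: "_ \<Rightarrow> real"
  assumes f: "set_integrable M A f" and nonpos: "\<And>y. y \<in> A \<Longrightarrow> f y \<le> 0"
  shows "(LINT y:A|M. f y) \<le> 0"
proof -
  have "(LINT y:A|M. f y) \<le> (LINT y:A|M. 0)"
    by (rule set_integral_mono[OF f]) (use nonpos in \<open>simp_all add: set_integrable_def\<close>)
  then show ?thesis by (simp add: set_lebesgue_integral_def)
qed

lemma AE_eq_0_if_set_integral_nonpos_eq_0:
  fixes f :: "_ \<Rightarrow> real"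
  assumes f: "set_integrable M A f" and nonpos: "\<And>y. y \<in> A \<Longrightarrow> f y \<le> 0"
    and zero: "(LINT y:A|M. f y) = 0"
  shows "AE y in M. y \<in> A \<longrightarrow> f y = 0"
proof -
  let ?g = "\<lambda>y. indicator A y * - f y"
  have "integrable M ?g" using f by (simp add: set_integrable_def)
  moreover have "integral\<^sup>L M ?g = 0" using zero by (simp add: set_lebesgue_integral_def)
  moreover have "AE y in M. 0 \<le> ?g y" using nonpos by (intro AE_I2) (simp add: indicator_def)
  ultimately have "AE y in M. ?g y = 0" using integral_nonneg_eq_0_iff_AE by blast
  then show ?thesis by eventually_elim (simp add: indicator_def)
qed

lemma AE_if_AE_outside_balls:
  fixes x :: "'a::euclidean_space"
  assumes "\<And>r. 0 < r \<Longrightarrow> AE y in lborel. y \<in> S - ball x r \<longrightarrow> P y"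
  shows "AE y in lborel. y \<in> S \<longrightarrow> P y"
proof -
  have "AE y in lborel. \<forall>j::nat. y \<in> S - ball x (inverse (Suc j)) \<longrightarrow> P y"
    unfolding AE_all_countable using assms by simp
  then show ?thesis
    using AE_lborel_singleton[of x]
  proof eventually_elim
    case (elim y)
    show ?case
    proof
      assume "y \<in> S"
      obtain j where "inverse (real (Suc j)) < dist x y"
        using reals_Archimedean elim(2) by (metis dist_pos_lt)
      with \<open>y \<in> S\<close> have "y \<in> S - ball x (inverse (Suc j))" by simp
      then show "P y" using elim(1) by blast
    qed
  qed
qed

text \<open>Removing a smaller ball only adds a nonpositive contribution, so the punctured integrals
  decrease as the radius shrinks; squeezed between their limit \<open>L \<ge> 0\<close> and \<open>0\<close> they all vanish.\<close>

lemma AE_eq_0_if_nonpos_and_punctured_limit_nonneg: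
  fixes f :: "'a::euclidean_space \<Rightarrow> real"
  assumes S: "S \<in> sets lborel"
    and nonpos: "\<And>y. y \<in> S \<Longrightarrow> y \<noteq> x \<Longrightarrow> f y \<le> 0"
    and int: "\<And>r. 0 < r \<Longrightarrow> set_integrable lborel (S - ball x r) f"
    and lim: "((\<lambda>r. LINT y:S - ball x r|lborel. f y) \<longlongrightarrow> L) (at_right 0)"
    and L: "0 \<le> L"
  shows "AE y in lborel. y \<in> S \<longrightarrow> f y = 0"
proof (rule AE_if_AE_outside_balls)
  define P where "P r = (LINT y:S - ball x r|lborel. f y)" for r
  have nonpos': "f y \<le> 0" if "y \<in> S - ball x r" "0 < r" for y r
    using nonpos[of y] that by (metis DiffD1 DiffD2 centre_in_ball)
  have P_mono: "P \<rho> \<le> P r" if "0 < \<rho>" "\<rho> \<le> r" for \<rho> r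
  proof -
    have int_shell: "set_integrable lborel (S \<inter> ball x r - ball x \<rho>) f"
      by (rule set_integrable_subset[OF int[OF that(1)]]) (use S in auto)
    have "S - ball x \<rho> = (S - ball x r) \<union> (S \<inter> ball x r - ball x \<rho>)"
      using that by auto
    then have "P \<rho> = P r + (LINT y:S \<inter> ball x r - ball x \<rho>|lborel. f y)"
      unfolding P_def
      by (simp only:) (rule set_integral_Un[OF _ int int_shell], auto intro: order.strict_trans2 that)
    moreover have "(LINT y:S \<inter> ball x r - ball x \<rho>|lborel. f y) \<le> 0"
      using set_integral_nonpos[OF int_shell] nonpos' that(1) by blast
    ultimately show ?thesis by simp
  qed
  fix r :: real
  assume r: "0 < r"
  have "L \<le> P r"
  proof (rule tendsto_upperbound[OF lim[folded P_def]])
    show "\<forall>\<^sub>F \<rho> in at_right 0. P \<rho> \<le> P r"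
      by (rule eventually_at_rightI[OF _ r]) (auto intro: P_mono)
  qed simp
  moreover have "P r \<le> 0"
    unfolding P_def using set_integral_nonpos[OF int[OF r]] nonpos' r by blast
  ultimately have "P r = 0" using L by simp
  then show "AE y in lborel. y \<in> S - ball x r \<longrightarrow> f y = 0"
    using AE_eq_0_if_set_integral_nonpos_eq_0[OF int[OF r] nonpos'[OF _ r]] by (simp add: P_def)
qed

lemma kernel_diff_principal_value:
  assumes def_u: "fpl_defined s p u x" and def_ul: "fpl_defined s p (\<lambda>y. u (reflect k lam y)) x"
  shows "\<And>r. 0 < r \<Longrightarrow> set_integrable lborel (- ball x r) (kernel_diff s p u k lam x)"
    and "((\<lambda>r. LINT y:- ball x r|lborel. kernel_diff s p u k lam x y) \<longlongrightarrow>
           Lim (at_right 0) (fpl_trunc s p (\<lambda>y. u (reflect k lam y)) x) - Lim (at_right 0) (fpl_trunc s p u x))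
         (at_right 0)"
proof -
  have int: "set_integrable lborel (- ball x r) (fpl_kernel s p u x)"
    "set_integrable lborel (- ball x r) (fpl_kernel s p (\<lambda>y. u (reflect k lam y)) x)" if "0 < r" for r
    using def_u def_ul that by (auto simp: fpl_defined_def)
  show "set_integrable lborel (- ball x r) (kernel_diff s p u k lam x)" if "0 < r" for r
    using set_integral_diff(1)[OF int(2,1)[OF that]] by (simp add: kernel_diff_def[abs_def])
  have trunc: "(LINT y:- ball x r|lborel. kernel_diff s p u k lam x y)
      = fpl_trunc s p (\<lambda>y. u (reflect k lam y)) x r - fpl_trunc s p u x r" if "0 < r" for r
    using set_integral_diff(2)[OF int(2,1)[OF that]] by (simp add: kernel_diff_def fpl_trunc_def)
  obtain L\<^sub>1 L\<^sub>2 where L: "(fpl_trunc s p (\<lambda>y. u (reflect k lam y)) x \<longlongrightarrow> L\<^sub>1) (at_right 0)"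
      "(fpl_trunc s p u x \<longlongrightarrow> L\<^sub>2) (at_right 0)"
    using def_u def_ul by (auto simp: fpl_defined_def)
  then have "Lim (at_right 0) (fpl_trunc s p (\<lambda>y. u (reflect k lam y)) x) = L\<^sub>1"
      "Lim (at_right 0) (fpl_trunc s p u x) = L\<^sub>2"
    by (auto intro: tendsto_Lim)
  moreover have "\<forall>\<^sub>F r in at_right 0. fpl_trunc s p (\<lambda>y. u (reflect k lam y)) x r - fpl_trunc s p u x r
      = (LINT y:- ball x r|lborel. kernel_diff s p u k lam x y)"
    using eventually_at_right_less[of 0] by eventually_elim (simp add: trunc)
  ultimately show "((\<lambda>r. LINT y:- ball x r|lborel. kernel_diff s p u k lam x y) \<longlongrightarrow>
           Lim (at_right 0) (fpl_trunc s p (\<lambda>y. u (reflect k lam y)) x) - Lim (at_right 0) (fpl_trunc s p u x))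
         (at_right 0)"
    using tendsto_diff[OF L] by (simp add: tendsto_cong)
qed

text \<open>For balls inside the half space the complement of the ball contains the reflected half
  space, whose contribution is the reflected kernel integrated over the whole half space; the
  punctured integrals of the folded kernel recover it in the limit.\<close>

lemma folded_kernel_diff_principal_value:
  fixes u :: "real^'n::finite \<Rightarrow> real"
  assumes x: "x \<in> half_space k lam"
    and def_u: "fpl_defined s p u x" and def_ul: "fpl_defined s p (\<lambda>y. u (reflect k lam y)) x"
  shows "\<And>r. 0 < r \<Longrightarrow>
           set_integrable lborel (half_space k lam - ball x r) (folded_kernel_diff s p u k lam x)"
    and "((\<lambda>r. LINT y:half_space k lam - ball x r|lborel. folded_kernel_diff s p u k lam x y) \<longlongrightarrow>
           Lim (at_right 0) (fpl_trunc s p (\<lambda>y. u (reflect k lam y)) x) - Lim (at_right 0) (fpl_trunc s p u x))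
         (at_right 0)"
proof -
  let ?\<Sigma> = "half_space k lam" and ?\<Phi> = "kernel_diff s p u k lam x" and ?R = "reflect k lam"
  note pv = kernel_diff_principal_value[OF def_u def_ul]
  define \<delta> where "\<delta> = lam - x $ k"
  have \<delta>: "0 < \<delta>" using x by (simp add: \<delta>_def half_space_def)
  have ball_meas: "- ball x r \<in> sets lborel" for r
    by (simp add: borel_closed)
  have far: "{y. lam < y $ k} \<subseteq> - ball x r" if "r \<le> \<delta>" for r
    using ball_subset_half_space[of r lam x k] that by (auto simp: \<delta>_def half_space_def)
  note fold = set_integral_fold_half_space[OF pv(1)[OF \<delta>] ball_meas far[OF order_refl]]
  have Diff_meas: "?\<Sigma> - ball x r \<in> sets lborel" for r
    using half_space_sets by (intro sets.Diff) (simp_all add: borel_open)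
  have \<Phi>_int: "set_integrable lborel (?\<Sigma> - ball x r) ?\<Phi>" if "0 < r" for r
    by (rule set_integrable_subset[OF pv(1)[OF that] Diff_meas]) auto
  have \<Phi>R_int: "set_integrable lborel (?\<Sigma> - ball x r) (\<lambda>y. ?\<Phi> (?R y))" for r
    by (rule set_integrable_subset[OF fold(1) Diff_meas]) auto
  show int: "set_integrable lborel (?\<Sigma> - ball x r) (folded_kernel_diff s p u k lam x)" if "0 < r" for r
    using set_integral_add(1)[OF \<Phi>_int[OF that] \<Phi>R_int] by (simp add: folded_kernel_diff_def[abs_def])
  have split: "(LINT y:?\<Sigma> - ball x r|lborel. folded_kernel_diff s p u k lam x y)
      = (LINT y:- ball x r|lborel. ?\<Phi> y) - (LINT y:?\<Sigma>|lborel. ?\<Phi> (?R y))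
        + (LINT y:?\<Sigma> - ball x r|lborel. ?\<Phi> (?R y))" if "0 < r" "r \<le> \<delta>" for r
  proof -
    have "- ball x r \<inter> ?\<Sigma> = ?\<Sigma> - ball x r" by auto
    then show ?thesis
      using set_integral_fold_half_space(2)[OF pv(1)[OF that(1)] ball_meas far[OF that(2)]]
        set_integral_add(2)[OF \<Phi>_int[OF that(1)] \<Phi>R_int]
      by (simp add: folded_kernel_diff_def)
  qed
  have "\<forall>\<^sub>F r in at_right 0. (LINT y:- ball x r|lborel. ?\<Phi> y) - (LINT y:?\<Sigma>|lborel. ?\<Phi> (?R y))
        + (LINT y:?\<Sigma> - ball x r|lborel. ?\<Phi> (?R y))
      = (LINT y:?\<Sigma> - ball x r|lborel. folded_kernel_diff s p u k lam x y)"
    by (rule eventually_at_rightI[OF _ \<delta>]) (simp add: split)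
  with tendsto_add[OF tendsto_diff[OF pv(2) tendsto_const[of "LINT y:?\<Sigma>|lborel. ?\<Phi> (?R y)"]]
      set_integral_Diff_ball_tendsto[OF fold(1), of x]]
  show "((\<lambda>r. LINT y:?\<Sigma> - ball x r|lborel. folded_kernel_diff s p u k lam x y) \<longlongrightarrow>
           Lim (at_right 0) (fpl_trunc s p (\<lambda>y. u (reflect k lam y)) x) - Lim (at_right 0) (fpl_trunc s p u x))
         (at_right 0)"
    by (simp add: tendsto_cong)
qed

lemma AE_not_in_ball_iff: "(AE y in lborel. y \<notin> ball c r) \<longleftrightarrow> r \<le> (0::real)"
  for c :: "'a::euclidean_space"
proof
  assume "AE y in lborel. y \<notin> ball c r"
  then have "emeasure lborel (ball c r) = 0"
    by (subst (asm) AE_iff_measurable[of "ball c r"]) auto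
  then show "r \<le> 0"
    using content_ball_pos[of r c] by (cases "0 < r") (auto simp: measure_def)
qed (intro AE_I2, smt (verit) zero_le_dist mem_ball)

lemma reflection_difference_vanishes_at_minimum:
  fixes u :: "real^'n::finite \<Rightarrow> real"
  assumes s: "0 < s" and p: "1 < p" and x: "x \<in> half_space k lam"
    and def_u: "fpl_defined s p u x" and def_ul: "fpl_defined s p (\<lambda>y. u (reflect k lam y)) x"
    and pv: "Lim (at_right 0) (fpl_trunc s p u x) \<le> Lim (at_right 0) (fpl_trunc s p (\<lambda>y. u (reflect k lam y)) x)"
    and min: "u (reflect k lam x) - u x \<le> 0"
      "\<And>y. y \<in> half_space k lam \<Longrightarrow> u (reflect k lam x) - u x \<le> u (reflect k lam y) - u y"
  shows "u (reflect k lam x) - u x = 0"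
    and "AE y in lborel. y \<in> half_space k lam \<longrightarrow> u (reflect k lam y) - u y = 0"
proof -
  let ?\<Sigma> = "half_space k lam"
  have "AE y in lborel. y \<in> ?\<Sigma> \<longrightarrow> folded_kernel_diff s p u k lam x y = 0"
  proof (rule AE_eq_0_if_nonpos_and_punctured_limit_nonneg)
    show "?\<Sigma> \<in> sets lborel" by (rule half_space_sets)
    show "folded_kernel_diff s p u k lam x y \<le> 0" if "y \<in> ?\<Sigma>" "y \<noteq> x" for y
      using folded_kernel_diff_nonpos(1)[OF s p x that min(1) min(2)[OF that(1)]] .
  qed (use folded_kernel_diff_principal_value[OF x def_u def_ul] pv in auto)
  then have AE: "AE y in lborel. y \<in> ?\<Sigma> \<longrightarrow> u (reflect k lam x) - u x = 0 \<and> u (reflect k lam y) - u y = 0"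
    using AE_lborel_singleton[of x]
    by eventually_elim (use folded_kernel_diff_nonpos(2)[OF s p x _ _ min(1) min(2)] in blast)
  show "u (reflect k lam x) - u x = 0"
  proof (rule ccontr)
    assume "u (reflect k lam x) - u x \<noteq> 0"
    with AE have "AE y in lborel. y \<notin> ?\<Sigma>" by auto
    then have "AE y in lborel. y \<notin> ball x (lam - x $ k)"
      by eventually_elim (use ball_subset_half_space[OF order_refl] in blast)
    then have "lam - x $ k \<le> 0" by (simp only: AE_not_in_ball_iff)
    with x show False by (simp add: half_space_def)
  qed
  show "AE y in lborel. y \<in> ?\<Sigma> \<longrightarrow> u (reflect k lam y) - u y = 0"
    using AE by eventually_elim blast
qed

section \<open>Existence of a negative minimum\<close>

lemma lsc_on_subset: "lsc_on S f \<Longrightarrow> T \<subseteq> S \<Longrightarrow> lsc_on T f"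
  unfolding lsc_on_def by (meson at_le filter_leD subsetD)

lemma lsc_on_attains_min:
  fixes f :: "'a::topological_space \<Rightarrow> real"
  assumes K: "compact K" "K \<noteq> {}" and lsc: "lsc_on K f"
  shows "\<exists>x\<in>K. \<forall>y\<in>K. f x \<le> f y"
proof (rule ccontr)
  assume "\<not> ?thesis"
  then obtain Y where Y: "\<And>x. x \<in> K \<Longrightarrow> Y x \<in> K \<and> f (Y x) < f x"
    by (metis not_le)
  define A where "A x = (f (Y x) + f x) / 2" for x
  \<comment> \<open>each point has a neighbourhood on which \<open>f\<close> stays above the level \<open>A x\<close>, which some other
      point undercuts; the finite subcover then has no point of lowest level\<close>
  have "\<exists>U. open U \<and> x \<in> U \<and> (\<forall>y\<in>U \<inter> K. A x < f y)" if "x \<in> K" for x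
  proof -
    have "A x < f x" using Y[OF that] by (simp add: A_def)
    with lsc that have "\<forall>\<^sub>F y in at x within K. A x < f y" by (simp add: lsc_on_def)
    with \<open>A x < f x\<close> show ?thesis by (auto simp: eventually_at_topological)
  qed
  then obtain U where U: "\<And>x. x \<in> K \<Longrightarrow> open (U x) \<and> x \<in> U x \<and> (\<forall>y\<in>U x \<inter> K. A x < f y)"
    by metis
  obtain D where D: "D \<subseteq> K" "finite D" "K \<subseteq> \<Union>(U ` D)"
    by (rule compactE_image[OF K(1), of K U]) (use U in auto)
  have "D \<noteq> {}" using D K(2) by auto
  then have "Min (A ` D) \<in> A ` D" using D(2) by (intro Min_in) auto
  then obtain i where i: "i \<in> D" "A i = Min (A ` D)" by auto
  then obtain j where j: "j \<in> D" "Y i \<in> U j" using D Y by blast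
  then have "A j < f (Y i)" using U[of j] D Y[of i] i by blast
  moreover have "f (Y i) < A i" using Y[of i] D i by (auto simp: A_def)
  moreover have "A i \<le> A j" using i j D(2) by simp
  ultimately show False by linarith
qed

lemma lsc_on_closure_attains_min_below:
  fixes w :: "'a::euclidean_space \<Rightarrow> real"
  assumes lsc: "lsc_on (closure \<Omega>) w"
    and bdd: "bounded \<Omega> \<or> Liminf at_infinity (\<lambda>x. ereal (w x)) \<ge> 0"
    and x\<^sub>1: "x\<^sub>1 \<in> \<Omega>" "w x\<^sub>1 < 0"
  shows "\<exists>x\<in>closure \<Omega>. w x \<le> w x\<^sub>1 \<and> (\<forall>y\<in>\<Omega>. w x \<le> w y)"
proof -
  obtain R where R: "norm x\<^sub>1 \<le> R" "\<And>y. y \<in> \<Omega> \<Longrightarrow> R < norm y \<Longrightarrow> w x\<^sub>1 < w y"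
  proof (cases "bounded \<Omega>")
    case True
    then obtain a where a: "\<forall>y\<in>\<Omega>. norm y \<le> a" by (auto simp: bounded_iff)
    show ?thesis by (rule that[of "max a (norm x\<^sub>1)"]) (use a in force)+
  next
    case False
    have "ereal (w x\<^sub>1) < 0" using x\<^sub>1(2) by simp
    also have "0 \<le> Liminf at_infinity (\<lambda>x. ereal (w x))" using bdd False by simp
    finally have "ereal (w x\<^sub>1) < Liminf at_infinity (\<lambda>x. ereal (w x))" .
    then have "\<forall>\<^sub>F y in at_infinity. ereal (w x\<^sub>1) < ereal (w y)" by (rule less_LiminfD)
    then obtain b where b: "\<And>y. b \<le> norm y \<Longrightarrow> w x\<^sub>1 < w y" by (auto simp: eventually_at_infinity)
    show ?thesis by (rule that[of "max b (norm x\<^sub>1)"]) (use b in force)+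
  qed
  define K where "K = closure \<Omega> \<inter> cball 0 R"
  have x\<^sub>1K: "x\<^sub>1 \<in> K" using x\<^sub>1 R closure_subset by (auto simp: K_def)
  have "compact K" by (simp add: K_def closed_Int_compact)
  moreover have "lsc_on K w" using lsc by (rule lsc_on_subset) (simp add: K_def)
  ultimately obtain x where x: "x \<in> K" "\<And>y. y \<in> K \<Longrightarrow> w x \<le> w y"
    using lsc_on_attains_min[of K w] x\<^sub>1K by auto
  have "w x \<le> w y" if "y \<in> \<Omega>" for y
  proof (cases "norm y \<le> R")
    case True
    then show ?thesis using that closure_subset by (intro x(2)) (auto simp: K_def)
  next
    case False
    then show ?thesis using R(2)[OF that] x(2)[OF x\<^sub>1K] by simp
  qed
  then show ?thesis using x(1) x(2)[OF x\<^sub>1K] unfolding K_def by blast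
qed

lemma negative_minimum_in_domain:
  fixes w :: "real^'n::finite \<Rightarrow> real"
  assumes sub: "\<Omega> \<subseteq> half_space k lam"
    and lsc: "lsc_on (closure \<Omega>) w"
    and bdd: "bounded \<Omega> \<or> Liminf at_infinity (\<lambda>x. ereal (w x)) \<ge> 0"
    and outside: "\<And>x. x \<in> half_space k lam - \<Omega> \<Longrightarrow> 0 \<le> w x"
    and hyperplane: "\<And>x. x $ k = lam \<Longrightarrow> w x = 0"
    and x\<^sub>1: "x\<^sub>1 \<in> \<Omega>" "w x\<^sub>1 < 0"
  shows "\<exists>x\<in>\<Omega>. w x < 0 \<and> (\<forall>y\<in>half_space k lam. w x \<le> w y)"
proof -
  obtain x where x: "x \<in> closure \<Omega>" "w x \<le> w x\<^sub>1" "\<forall>y\<in>\<Omega>. w x \<le> w y"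
    using lsc_on_closure_attains_min_below[OF lsc bdd x\<^sub>1] by blast
  have "closure \<Omega> \<subseteq> {y. y $ k \<le> lam}"
    using sub by (intro closure_minimal) (auto simp: half_space_def closed_halfspace_component_le_cart)
  moreover have "w x < 0" using x(2) x\<^sub>1(2) by simp
  ultimately have "x \<in> \<Omega>"
    using x(1) outside[of x] hyperplane[of x] by (force simp: half_space_def)
  moreover have "w x \<le> w y" if "y \<in> half_space k lam" for y
    using x(3) \<open>w x < 0\<close> that outside[of y] by (cases "y \<in> \<Omega>") auto
  ultimately show ?thesis using \<open>w x < 0\<close> by blast
qed

section \<open>The maximum principle\<close>

theorem theorem2p2:
  fixes u :: "real^'n::finite \<Rightarrow> real"
    and k :: 'n
    and s p lam C :: real
    and \<Omega> :: "(real^'n) set"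
  assumes C_pos: "C > 0"
    and s: "0 < s" "s < 1"
    and p: "p > 1"
    and dom: "open \<Omega>" "connected \<Omega>" "\<Omega> \<noteq> {}"
    and sub: "\<Omega> \<subseteq> half_space k lam"
    and bdd_or_liminf: "bounded \<Omega> \<or> Liminf at_infinity (\<lambda>x. ereal (u (reflect k lam x) - u x)) \<ge> 0"
    and Lsp: "L_sp s p (\<lambda>x. u (reflect k lam x) - u x)"
    and C11: "C11_loc \<Omega> (\<lambda>x. u (reflect k lam x) - u x)"
    and lsc: "lsc_on (closure \<Omega>) (\<lambda>x. u (reflect k lam x) - u x)"
    and def_u: "\<forall>x\<in>\<Omega>. fpl_defined s p u x"
    and def_ul: "\<forall>x\<in>\<Omega>. fpl_defined s p (\<lambda>y. u (reflect k lam y)) x"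
    and ineq: "\<forall>x\<in>\<Omega>. frac_p_laplacian C s p (\<lambda>y. u (reflect k lam y)) x
                        - frac_p_laplacian C s p u x \<ge> 0"
    and outside: "\<forall>x\<in>half_space k lam - \<Omega>. u (reflect k lam x) - u x \<ge> 0"
    and antisym: "\<forall>x\<in>half_space k lam.
        u (reflect k lam (reflect k lam x)) - u (reflect k lam x) = - (u (reflect k lam x) - u x)"
  shows "(\<forall>x\<in>\<Omega>. u (reflect k lam x) - u x \<ge> 0) \<and>
         ((\<exists>x\<in>\<Omega>. u (reflect k lam x) - u x = 0) \<longrightarrow>
            (AE x in lebesgue. u (reflect k lam x) - u x = 0))"
proof -
  define w where "w x = u (reflect k lam x) - u x" for x
  have hyperplane: "w x = 0" if "x $ k = lam" for x
    using that by (simp add: w_def reflect_eq_self)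
  have pv: "Lim (at_right 0) (fpl_trunc s p u x) \<le> Lim (at_right 0) (fpl_trunc s p (\<lambda>y. u (reflect k lam y)) x)"
    if "x \<in> \<Omega>" for x
    using ineq that C_pos by (simp add: frac_p_laplacian_def right_diff_distrib[symmetric] zero_le_mult_iff)
  have vanishes: "w x = 0 \<and> (AE y in lborel. y \<in> half_space k lam \<longrightarrow> w y = 0)"
    if "x \<in> \<Omega>" "w x \<le> 0" "\<And>y. y \<in> half_space k lam \<Longrightarrow> w x \<le> w y" for x
    using reflection_difference_vanishes_at_minimum[OF s(1) p subsetD[OF sub that(1)]
        def_u[rule_format, OF that(1)] def_ul[rule_format, OF that(1)] pv[OF that(1)]
        that(2,3)[unfolded w_def]]
    by (simp add: w_def)
  have nonneg: "\<forall>x\<in>\<Omega>. 0 \<le> w x"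
  proof (rule ccontr)
    assume "\<not> ?thesis"
    then obtain x\<^sub>1 where "x\<^sub>1 \<in> \<Omega>" "w x\<^sub>1 < 0" by (auto simp: not_le)
    then obtain x where "x \<in> \<Omega>" "w x < 0" "\<forall>y\<in>half_space k lam. w x \<le> w y"
      using negative_minimum_in_domain[OF sub lsc[folded w_def] bdd_or_liminf[folded w_def]
          outside[folded w_def, rule_format] hyperplane] by blast
    with vanishes[of x] show False by simp
  qed
  moreover have "AE x in lebesgue. w x = 0" if "x \<in> \<Omega>" "w x = 0" for x
  proof (rule AE_completion, rule AE_eq_0_if_odd_under_reflect)
    have "w x \<le> w y" if "y \<in> half_space k lam" for y
      using nonneg outside[folded w_def] that \<open>x \<in> \<Omega>\<close> \<open>w x = 0\<close> by (cases "y \<in> \<Omega>") auto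
    then show "AE y in lborel. y \<in> half_space k lam \<longrightarrow> w y = 0"
      using vanishes[of x] that by simp
  qed (simp add: w_def)
  ultimately show ?thesis unfolding w_def by blast
qed

end
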